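(* Let $n\ge2$ and let $U^+$ be the subalgebra of $U_{r,s}(\mathfrak{so}_{2n+1})$ generated by $e_1,\dots,e_n$, with root vectors as in the context. Then in $U^+$: (1) $\mathcal E_{i,n}\mathcal E_{j,n}-rs\,\mathcal E_{j,n}\mathcal E_{i,n}=\mathcal E_{j,n-1}\mathcal E_{i,n'}-r^2\mathcal E_{i,n'}\mathcal E_{j,n-1}$ for $i<j<n$; (2) $\mathcal E_{j,k}\mathcal E_{i,(k+1)'}-r^2\mathcal E_{i,(k+1)'}\mathcal E_{j,k}=\mathcal E_{i,(k+2)'}\mathcal E_{j,k+1}-s^{-2}\mathcal E_{j,k+1}\mathcal E_{i,(k+2)'}$ for $i<j<k<n-1$; (3) $\mathcal E_{n-1,n}\mathcal E_{n-1,n'}=s^2\mathcal E_{n-1,n'}\mathcal E_{n-1,n}$; (4) $\mathcal E_{i,j'}e_n=(rs)^2e_n\mathcal E_{i,j'}$ for $i<j<n$; (5) $\mathcal E_{i,n'}\mathcal E_{n-1,n}=\mathcal E_{n-1,n}\mathcal E_{i,n'}$ for $i<n-1$; (6) $\mathcal E_{i,n'}\mathcal E_{n-1,n'}=s^2\mathcal E_{n-1,n'}\mathcal E_{i,n'}$ for $i<n-1$; (7) $\mathcal E_{i,(n-1)'}\mathcal E_{n-1,n}=s^2\mathcal E_{n-1,n}\mathcal E_{i,(n-1)'}$ for $i<n-1$; (8) $\mathcal E_{i,(n-1)'}\mathcal E_{n-1,n'}=(rs^2)^2\mathcal E_{n-1,n'}\mathcal E_{i,(n-1)'}$ for $i<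n-1$.
   Context: Let $r,s\in\mathbb C^*$ with $r^3\ne s^3$, $r^4\ne s^4$, $\mathbb K=\mathbb Q(r,s)$. $U_{r,s}(\mathfrak{so}_{2n+1})$ is the $\mathbb K$-algebra generated by $e_i,f_i,\omega_i^{\pm1},\omega_i'^{\pm1}$ ($1\le i\le n$) with: $\omega$'s commute, invertible; $\omega_je_i\omega_j^{-1}=\langle\omega_i',\omega_j\rangle e_i$, $\omega_jf_i\omega_j^{-1}=\langle\omega_i',\omega_j\rangle^{-1}f_i$, $\omega_j'e_i\omega_j'^{-1}=\langle\omega_j',\omega_i\rangle^{-1}e_i$, $\omega_j'f_i\omega_j'^{-1}=\langle\omega_j',\omega_i\rangle f_i$, where $\langle\omega_i',\omega_i\rangle=r^2s^{-2}$ ($i<n$), $\langle\omega_n',\omega_n\rangle=rs^{-1}$, $\langle\omega_i',\omega_{i+1}\rangle=r^{-2}$, $\langle\omega_{i+1}',\omega_i\rangle=s^2$ ($i<n$), others $1$; $e_if_j-f_je_i=\delta_{ij}(\omega_i-\omega_i')/(r_i-s_i)$ ($r_i=r^2,s_i=s^2$ for $i<n$; $r_n=r,s_n=s$); Serre relations $(\mathrm{ad}_le_i)^{1-a_{ij}}(e_j)=0=(\mathrm{ad}_rf_i)^{1-a_{ij}}(f_j)$, $i\ne j$, with $(a_{ij})$ the $B_n$ Cartan matrix ($a_{ii}=2$, $a_{i,i+1}=a_{i+1,i}=-1$ for $i\le n-2$, $a_{n-1,n}=-1$, $a_{n,n-1}=-2$, else $0$), $\mathrm{ad}_l(a)(b)=\sum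 a_{(1)}bS(a_{(2)})$, $\mathrm{ad}_r(a)(b)=\sum S(a_{(1)})ba_{(2)}$, for the Hopf structure $\Delta(\omega)=\omega\otimes\omega$, $\Delta(e_i)=e_i\otimes1+\omega_i\otimes e_i$, $\Delta(f_i)=1\otimes f_i+f_i\otimes\omega_i'$, $S(e_i)=-\omega_i^{-1}e_i$, $S(f_i)=-f_i\omega_i'^{-1}$. Root vectors: $\mathcal E_{i,i}=e_i$, $\mathcal E_{i,j}=e_i\mathcal E_{i+1,j}-r^2\mathcal E_{i+1,j}e_i$ ($1\le i<j\le n$), $\mathcal E_{i,n'}=\mathcal E_{i,n}e_n-rs\,e_n\mathcal E_{i,n}$ ($i\le n-1$), $\mathcal E_{i,j'}=\mathcal E_{i,(j+1)'}e_j-s^{-2}e_j\mathcal E_{i,(j+1)'}$ ($1\le i<j\le n-1$). *)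

theory Defs
  imports Complex_Main
begin

(* Pairing <omega_i', omega_j> for the two-parameter quantum group of type B_n *)
definition pairB :: "nat \<Rightarrow> complex \<Rightarrow> complex \<Rightarrow> nat \<Rightarrow> nat \<Rightarrow> complex" where
  "pairB n r s i j =
     (if i = j then (if i < n then r^2 * inverse (s^2) else r * inverse s)
      else if j = i + 1 then inverse (r^2)
      else if i = j + 1 then s^2
      else 1)"

definition cartanB :: "nat \<Rightarrow> nat \<Rightarrow> nat \<Rightarrow> int" where
  "cartanB n i j =
     (if i = j then 2
      else if j = i + 1 \<and> i \<le> n - 2 then -1
      else if i = j + 1 \<and> j \<le> n - 2 then -1
      else if i = n - 1 \<and> j = n then -1
      else if i = n \<and> j = n - 1 then -2
      else 0)"

definition rB :: "nat \<Rightarrow> complex \<Rightarrow> nat \<Rightarrow> complex" where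
  "rB n r i = (if i < n then r^2 else r)"

definition adl :: "(nat \<Rightarrow> 'a::ring_1) \<Rightarrow> (nat \<Rightarrow> 'a) \<Rightarrow> (nat \<Rightarrow> 'a) \<Rightarrow> nat \<Rightarrow> 'a \<Rightarrow> 'a" where
  "adl e w winv i b = e i * b - w i * b * winv i * e i"

definition adr :: "(nat \<Rightarrow> 'a::ring_1) \<Rightarrow> (nat \<Rightarrow> 'a) \<Rightarrow> (nat \<Rightarrow> 'a) \<Rightarrow> nat \<Rightarrow> 'a \<Rightarrow> 'a" where
  "adr f wp wpinv i b = b * f i - f i * wpinv i * b * wp i"

(* c : scalar embedding K -> A, an algebra structure (ring hom into the centre) *)
definition scalar_emb :: "(complex \<Rightarrow> 'a::ring_1) \<Rightarrow> bool" where
  "scalar_emb c \<longleftrightarrow> (\<forall>x y. c (x + y) = c x + c y) \<and> (\<forall>x y. c (x * y) = c x * c y)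
      \<and> c 1 = 1 \<and> (\<forall>x a. c x * a = a * c x)"

definition Urs_rel ::
  "nat \<Rightarrow> complex \<Rightarrow> complex \<Rightarrow> (complex \<Rightarrow> 'a::ring_1) \<Rightarrow> (nat \<Rightarrow> 'a) \<Rightarrow> (nat \<Rightarrow> 'a)
   \<Rightarrow> (nat \<Rightarrow> 'a) \<Rightarrow> (nat \<Rightarrow> 'a) \<Rightarrow> (nat \<Rightarrow> 'a) \<Rightarrow> (nat \<Rightarrow> 'a) \<Rightarrow> bool" where
  "Urs_rel n r s c e f w wp winv wpinv \<longleftrightarrow>
    scalar_emb c \<and>
    (\<forall>i\<in>{1..n}. w i * winv i = 1 \<and> winv i * w i = 1 \<and> wp i * wpinv i = 1 \<and> wpinv i * wp i = 1) \<and>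
    (\<forall>i\<in>{1..n}. \<forall>j\<in>{1..n}. w i * w j = w j * w i \<and> w i * wp j = wp j * w i \<and> wp i * wp j = wp j * wp i) \<and>
    (\<forall>i\<in>{1..n}. \<forall>j\<in>{1..n}.
        w j * e i * winv j = c (pairB n r s i j) * e i \<and>
        w j * f i * winv j = c (inverse (pairB n r s i j)) * f i \<and>
        wp j * e i * wpinv j = c (inverse (pairB n r s j i)) * e i \<and>
        wp j * f i * wpinv j = c (pairB n r s j i) * f i) \<and>
    (\<forall>i\<in>{1..n}. \<forall>j\<in>{1..n}.
        e i * f j - f j * e i =
          (if i = j then c (inverse (rB n r i - rB n s i)) * (w i - wp i) else 0)) \<and>
    (\<forall>i\<in>{1..n}. \<forall>j\<in>{1..n}. i \<noteq> j \<longrightarrow>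
        ((adl e w winv i) ^^ nat (1 - cartanB n i j)) (e j) = 0 \<and>
        ((adr f wp wpinv i) ^^ nat (1 - cartanB n i j)) (f j) = 0)"

(* E_{i,i+k} *)
primrec Ek :: "(complex \<Rightarrow> 'a::ring_1) \<Rightarrow> complex \<Rightarrow> (nat \<Rightarrow> 'a) \<Rightarrow> nat \<Rightarrow> nat \<Rightarrow> 'a" where
  "Ek c r e i 0 = e i"
| "Ek c r e i (Suc k) = e i * Ek c r e (i + 1) k - c (r^2) * Ek c r e (i + 1) k * e i"

definition RE :: "(complex \<Rightarrow> 'a::ring_1) \<Rightarrow> complex \<Rightarrow> (nat \<Rightarrow> 'a) \<Rightarrow> nat \<Rightarrow> nat \<Rightarrow> 'a" where
  "RE c r e i j = Ek c r e i (j - i)"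

(* E_{i,(n-m)'} *)
primrec Epk :: "nat \<Rightarrow> (complex \<Rightarrow> 'a::ring_1) \<Rightarrow> complex \<Rightarrow> complex \<Rightarrow> (nat \<Rightarrow> 'a) \<Rightarrow> nat \<Rightarrow> nat \<Rightarrow> 'a" where
  "Epk n c r s e i 0 = RE c r e i n * e n - c (r * s) * e n * RE c r e i n"
| "Epk n c r s e i (Suc m) =
     Epk n c r s e i m * e (n - Suc m) - c (inverse (s^2)) * e (n - Suc m) * Epk n c r s e i m"

definition REp :: "nat \<Rightarrow> (complex \<Rightarrow> 'a::ring_1) \<Rightarrow> complex \<Rightarrow> complex \<Rightarrow> (nat \<Rightarrow> 'a) \<Rightarrow> nat \<Rightarrow> nat \<Rightarrow> 'a" where
  "REp n c r s e i j = Epk n c r s e i (n - j)"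

end

theory Submission
  imports Defs "HOL-Library.Multiset"
begin

text \<open>
All eight relations are consequences of the Serre relations among e_1, ..., e_n alone. Since e_i
and e_j commute for |i - j| \<ge> 2, the nested q-commutators defining the root vectors can be
unwound one generator at a time, and each relation reduces, by induction on the lengths of the
root vectors involved, to an identity in a subalgebra of type B_2, A_3, B_3 or B_4 whose
generators are root vectors satisfying the Serre relations of that type again. Those finitely
many identities are verified by explicit certificates of membership in the two-sided ideal of
the free algebra over \<int>[r^\<plusminus>1, s^\<plusminus>1] generated by the hypotheses, up to a divisor
1, r^2 + s^2 or r^2 + rs + s^2; the latter two are nonzero because r^4 \<noteq> s^4 and r^3 \<noteq> s^3.
\<close>

section \<open>Noncommutative polynomials and ideal membership certificates\<close>

text \<open>A term (k, a, b, w) stands for k r^a s^b x_{w_1} \<cdots> x_{w_m}.\<close>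

type_synonym nc_term = "int \<times> int \<times> int \<times> nat list"
type_synonym nc_poly = "nc_term list"

fun term_mult :: "nc_term \<Rightarrow> nc_term \<Rightarrow> nc_term" where
  "term_mult (k, a, b, u) (l, a', b', v) = (k * l, a + a', b + b', u @ v)"

definition pmult :: "nc_poly \<Rightarrow> nc_poly \<Rightarrow> nc_poly" where
  "pmult P Q = concat (map (\<lambda>t. map (term_mult t) Q) P)"

fun pscale :: "int \<times> int \<times> int \<Rightarrow> nc_poly \<Rightarrow> nc_poly" where
  "pscale (k, a, b) P = map (term_mult (k, a, b, [])) P"

definition pminus :: "nc_poly \<Rightarrow> nc_poly \<Rightarrow> nc_poly" where
  "pminus P Q = P @ map (\<lambda>(k, a, b, w). (- k, a, b, w)) Q"

definition pvar :: "nat \<Rightarrow> nc_poly" where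
  "pvar i = [(1, 0, 0, [i])]"

definition pqcomm :: "nc_poly \<Rightarrow> nc_poly \<Rightarrow> int \<times> int \<times> int \<Rightarrow> nc_poly" where
  "pqcomm P Q m = pminus (pmult P Q) (pscale m (pmult Q P))"

fun combine_like_terms :: "nc_poly \<Rightarrow> nc_poly" where
  "combine_like_terms [] = []"
| "combine_like_terms [(k, a, b, w)] = (if k = 0 then [] else [(k, a, b, w)])"
| "combine_like_terms ((k, a, b, w) # (l, a', b', w') # P) =
     (if (a, b, w) = (a', b', w') then combine_like_terms ((k + l, a, b, w) # P)
      else if k = 0 then combine_like_terms ((l, a', b', w') # P)
      else (k, a, b, w) # combine_like_terms ((l, a', b', w') # P))"

fun word_le :: "nat list \<Rightarrow> nat list \<Rightarrow> bool" where
  "word_le [] v = True"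
| "word_le (x # u) [] = False"
| "word_le (x # u) (y # v) = (x < y \<or> (x = y \<and> word_le u v))"

fun term_le :: "nc_term \<Rightarrow> nc_term \<Rightarrow> bool" where
  "term_le (k, a, b, u) (l, a', b', v) =
     (if u = v then a < a' \<or> (a = a' \<and> b \<le> b') else word_le u v)"

fun merge_terms :: "nc_poly \<Rightarrow> nc_poly \<Rightarrow> nc_poly" where
  "merge_terms [] Q = Q"
| "merge_terms P [] = P"
| "merge_terms (t # P) (t' # Q) =
     (if term_le t t' then t # merge_terms P (t' # Q) else t' # merge_terms (t # P) Q)"

function sort_terms :: "nc_poly \<Rightarrow> nc_poly" where
  "sort_terms P = (if length P \<le> 1 then P else
      merge_terms (sort_terms (take (length P div 2) P)) (sort_terms (drop (length P div 2) P)))"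
  by pat_completeness auto
termination
  by (relation "measure length") auto

declare sort_terms.simps [simp del]

definition pnormalize :: "nc_poly \<Rightarrow> nc_poly" where
  "pnormalize P = combine_like_terms (sort_terms P)"

lemma mset_merge_terms: "mset (merge_terms P Q) = mset P + mset Q"
  by (induction P Q rule: merge_terms.induct) (simp_all add: add_mset_commute)

lemma mset_sort_terms: "mset (sort_terms P) = mset P"
proof (induction P rule: sort_terms.induct)
  case (1 P)
  then show ?case
    by (subst sort_terms.simps)
       (simp add: mset_merge_terms flip: mset_append)
qed

text \<open>An entry (k, a, b, u, j, v) of a certificate stands for k r^a s^b x_u H_j x_v.\<close>

type_synonym certificate = "(int \<times> int \<times> int \<times> nat list \<times> nat \<times> nat list) list"

definition cert_expand :: "nc_poly list \<Rightarrow> certificate \<Rightarrow> nc_poly" where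
  "cert_expand H C = concat (map (\<lambda>(k, a, b, u, j, v).
     map (\<lambda>(l, a', b', w). (k * l, a + a', b + b', u @ w @ v)) (H ! j)) C)"

definition admissible_divisors :: "(int \<times> int \<times> int) list list" where
  "admissible_divisors = [[(1, 0, 0)], [(1, 0, 2), (1, 2, 0)], [(1, 0, 2), (1, 1, 1), (1, 2, 0)]]"

definition pconst :: "(int \<times> int \<times> int) list \<Rightarrow> nc_poly" where
  "pconst d = map (\<lambda>(k, a, b). (k, a, b, [])) d"

definition cert_ok ::
    "nc_poly list \<Rightarrow> nc_poly \<Rightarrow> (int \<times> int \<times> int) list \<Rightarrow> certificate \<Rightarrow> bool" where
  "cert_ok H T d C \<longleftrightarrow> d \<in> set admissible_divisors
     \<and> list_all (\<lambda>(_, _, _, _, j, _). j < length H) C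
     \<and> pnormalize (pminus (pmult (pconst d) T) (cert_expand H C)) = []"

text \<open>
A step (T, d, C) certifies that d T lies in the ideal generated by H; T is then available as a
hypothesis for the following steps.
\<close>

type_synonym cert_step = "nc_poly \<times> (int \<times> int \<times> int) list \<times> certificate"

fun certified :: "nc_poly list \<Rightarrow> cert_step list \<Rightarrow> bool" where
  "certified H [] = True"
| "certified H ((T, d, C) # S) \<longleftrightarrow> cert_ok H T d C \<and> certified (H @ [T]) S"

section \<open>q-commutators\<close>

locale central_scalars =
  fixes c :: "complex \<Rightarrow> 'a::ring_1"
  assumes scalar_emb: "scalar_emb c"
begin

lemma c_add: "c (x + y) = c x + c y"
  using scalar_emb unfolding scalar_emb_def by blast

lemma c_mult: "c (x * y) = c x * c y"
  using scalar_emb unfolding scalar_emb_def by blast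

lemma c_one [simp]: "c 1 = 1"
  using scalar_emb unfolding scalar_emb_def by blast

lemma c_commute: "c x * a = a * c x"
  using scalar_emb unfolding scalar_emb_def by blast

lemma c_zero [simp]: "c 0 = 0"
  using c_add[of 0 0] by simp

lemma c_uminus: "c (- x) = - c x"
  using c_add[of x "- x"] by (simp add: eq_neg_iff_add_eq_0 add.commute)

lemma c_left_commute: "a * (c x * b) = c x * (a * b)"
  by (metis c_commute mult.assoc)

lemma c_left_commute_nonscalar: "NO_MATCH (c z) a \<Longrightarrow> a * (c x * b) = c x * (a * b)"
  by (rule c_left_commute)

lemma c_commute_nonscalar: "NO_MATCH (c z) a \<Longrightarrow> a * c x = c x * a"
  by (rule c_commute[symmetric])

lemma c_mult_left: "c x * (c y * b) = c (x * y) * b"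
  by (simp add: c_mult mult.assoc)

lemmas scalar_normalize = c_left_commute_nonscalar c_commute_nonscalar c_mult_left c_mult[symmetric]

definition qcomm :: "'a \<Rightarrow> 'a \<Rightarrow> complex \<Rightarrow> 'a" where
  "qcomm x y q = x * y - c q * (y * x)"

lemma qcomm_eq_0_iff: "qcomm x y q = 0 \<longleftrightarrow> x * y = c q * y * x"
  by (simp add: qcomm_def mult.assoc)

lemma qcomm_one_eq_0_iff: "qcomm x y 1 = 0 \<longleftrightarrow> x * y = y * x"
  by (simp add: qcomm_def)

lemma diff_eq_qcomm: "x * y - c q * y * x = qcomm x y q"
  by (simp add: qcomm_def mult.assoc)

lemma qcomm_zero_left [simp]: "qcomm 0 y q = 0"
  by (simp add: qcomm_def)

lemma qcomm_zero_right [simp]: "qcomm x 0 q = 0"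
  by (simp add: qcomm_def)

lemma left_commute_of_commute:
  fixes a y z :: 'a
  assumes "a * y = y * a"
  shows "a * (y * z) = y * (a * z)"
  by (simp only: mult.assoc[symmetric] assms)

lemma qcomm_commute:
  assumes "a * y = y * a" "x * y = y * x"
  shows "qcomm a x q * y = y * qcomm a x q"
  unfolding qcomm_def
  by (simp add: algebra_simps scalar_normalize assms left_commute_of_commute[OF assms(1)]
      left_commute_of_commute[OF assms(2)])

lemma qcomm_assoc:
  assumes "a * y = y * a"
  shows "qcomm (qcomm a x p) y q = qcomm a (qcomm x y q) p"
  unfolding qcomm_def
  by (simp add: algebra_simps scalar_normalize assms left_commute_of_commute[OF assms])

lemma qcomm_exchange_left:
  assumes "a * y = y * a"
  shows "qcomm y (qcomm a x p) q = qcomm a (qcomm y x q) p"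
  unfolding qcomm_def
  by (simp add: algebra_simps scalar_normalize assms left_commute_of_commute[OF assms])

lemma qcomm_exchange_right:
  assumes "a * y = y * a"
  shows "qcomm (qcomm x a p) y q = qcomm (qcomm x y q) a p"
  unfolding qcomm_def
  by (simp add: algebra_simps scalar_normalize assms left_commute_of_commute[OF assms])

lemma qcomm_scalar_right: "qcomm x (c a * y) q = c a * qcomm x y q"
  unfolding qcomm_def by (simp add: algebra_simps scalar_normalize mult.commute)

lemma qcomm_reverse: "q \<noteq> 0 \<Longrightarrow> qcomm x y q = c (- q) * qcomm y x (inverse q)"
  unfolding qcomm_def by (simp add: algebra_simps scalar_normalize c_uminus)

lemma qcomm_qcomm_reverse:
  assumes "p \<noteq> 0" and "q \<noteq> 0"
  shows "qcomm (qcomm x y p) y q = c (p * q) * qcomm y (qcomm y x (inverse p)) (inverse q)"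
  using assms
  by (simp add: qcomm_reverse[of q] qcomm_reverse[of p x] qcomm_scalar_right scalar_normalize mult.commute)

lemma qcomm_qcomm_qcomm_reverse:
  assumes "p \<noteq> 0" and "q \<noteq> 0" and "t \<noteq> 0"
  shows "qcomm (qcomm (qcomm x y p) y q) y t
    = c (- (p * q * t)) * qcomm y (qcomm y (qcomm y x (inverse p)) (inverse q)) (inverse t)"
  using assms
  by (simp add: qcomm_reverse[of t] qcomm_qcomm_reverse qcomm_scalar_right scalar_normalize mult_ac)

lemma qcomm_qcomm_symmetric: "qcomm x (qcomm x y p) q = qcomm x (qcomm x y q) p"
  unfolding qcomm_def by (simp add: algebra_simps scalar_normalize mult.commute)

end

locale laurent_scalars = central_scalars c for c :: "complex \<Rightarrow> 'a::ring_1" +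
  fixes r s :: complex
  assumes r_nonzero: "r \<noteq> 0" and s_nonzero: "s \<noteq> 0"
begin

fun monomial :: "int \<times> int \<times> int \<Rightarrow> complex" where
  "monomial (k, a, b) = of_int k * r powi a * s powi b"

declare monomial.simps [simp del]

fun term_eval :: "(nat \<Rightarrow> 'a) \<Rightarrow> nc_term \<Rightarrow> 'a" where
  "term_eval g (k, a, b, w) = c (monomial (k, a, b)) * prod_list (map g w)"

definition peval :: "(nat \<Rightarrow> 'a) \<Rightarrow> nc_poly \<Rightarrow> 'a" where
  "peval g P = sum_list (map (term_eval g) P)"

lemma monomial_mult: "monomial (k, a, b) * monomial (l, a', b') = monomial (k * l, a + a', b + b')"
  using r_nonzero s_nonzero by (simp add: monomial.simps power_int_add algebra_simps)

lemma term_eval_mult: "term_eval g (term_mult t t') = term_eval g t * term_eval g t'"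
proof -
  obtain k a b u l a' b' v where t: "t = (k, a, b, u)" and t': "t' = (l, a', b', v)"
    by (cases t, cases t') blast
  have "c (monomial (k, a, b)) * prod_list (map g u) * (c (monomial (l, a', b')) * prod_list (map g v))
      = c (monomial (k, a, b) * monomial (l, a', b')) * (prod_list (map g u) * prod_list (map g v))"
    by (simp only: c_mult mult.assoc c_left_commute[of "prod_list (map g u)"])
  then show ?thesis
    by (simp add: t t' monomial_mult)
qed

lemma peval_Nil [simp]: "peval g [] = 0"
  by (simp add: peval_def)

lemma peval_Cons [simp]: "peval g (t # P) = term_eval g t + peval g P"
  by (simp add: peval_def)

lemma peval_append [simp]: "peval g (P @ Q) = peval g P + peval g Q"
  by (simp add: peval_def)

lemma peval_pmult [simp]: "peval g (pmult P Q) = peval g P * peval g Q"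
proof -
  have "peval g (map (term_mult t) Q) = term_eval g t * peval g Q" for t
    by (induction Q) (simp_all add: term_eval_mult distrib_left)
  moreover have "pmult (t # P) Q = map (term_mult t) Q @ pmult P Q" for t P
    by (simp add: pmult_def)
  ultimately show ?thesis
    by (induction P) (simp_all add: distrib_right, simp add: pmult_def)
qed

lemma peval_pminus [simp]: "peval g (pminus P Q) = peval g P - peval g Q"
proof -
  have "peval g (map (\<lambda>(k, a, b, w). (- k, a, b, w)) Q) = - peval g Q"
    by (induction Q) (auto simp: monomial.simps c_uminus)
  then show ?thesis
    by (simp add: pminus_def)
qed

lemma peval_pscale [simp]: "peval g (pscale m P) = c (monomial m) * peval g P"
proof -
  have "peval g (map (term_mult t) P) = term_eval g t * peval g P" for t
    by (induction P) (simp_all add: term_eval_mult distrib_left)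
  then show ?thesis
    by (cases m) simp
qed

lemma peval_pvar [simp]: "peval g (pvar i) = g i"
  by (simp add: pvar_def monomial.simps)

lemma peval_pqcomm [simp]: "peval g (pqcomm P Q m) = qcomm (peval g P) (peval g Q) (monomial m)"
  by (simp add: pqcomm_def qcomm_def)

lemma peval_pconst [simp]: "peval g (pconst d) = c (sum_list (map monomial d))"
  by (induction d) (auto simp: pconst_def c_add)

lemma peval_pnormalize [simp]: "peval g (pnormalize P) = peval g P"
proof -
  have "peval g (combine_like_terms P) = peval g P" for P
  proof (induction P rule: combine_like_terms.induct)
    case (3 k a b w l a' b' w' P)
    have "term_eval g (k, a, b, w) + term_eval g (l, a, b, w) = term_eval g (k + l, a, b, w)"
      by (simp add: monomial.simps c_add distrib_right)
    with 3 show ?case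
      by (auto simp: monomial.simps add.assoc)
  qed (simp_all add: monomial.simps)
  moreover have "peval g (sort_terms P) = peval g P"
    using mset_sort_terms[of P] unfolding peval_def
    by (metis mset_map sum_mset_sum_list)
  ultimately show ?thesis
    by (simp add: pnormalize_def)
qed

lemma peval_cert_expand:
  assumes "list_all (\<lambda>(_, _, _, _, j, _). j < length H) C" "list_all (\<lambda>P. peval g P = 0) H"
  shows "peval g (cert_expand H C) = 0"
proof -
  have entry: "term_eval g (k * l, a + a', b + b', u @ w @ v)
      = c (monomial (k, a, b)) * (prod_list (map g u) * term_eval g (l, a', b', w) * prod_list (map g v))"
    for k a b u v l a' b' w
    by (simp add: mult.assoc c_mult c_left_commute[of "prod_list (map g u)"] flip: monomial_mult)
  have expand_entry: "peval g (map (\<lambda>(l, a', b', w). (k * l, a + a', b + b', u @ w @ v)) P)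
      = c (monomial (k, a, b)) * (prod_list (map g u) * peval g P * prod_list (map g v))" for k a b u v P
    by (induction P) (auto simp del: term_eval.simps simp: entry ring_distribs)
  from assms show ?thesis
    by (induction C) (auto simp: cert_expand_def expand_entry list_all_iff)
qed

lemma certified_sound:
  assumes "certified H S" and "list_all (\<lambda>P. peval g P = 0) H"
    and "\<forall>d \<in> set admissible_divisors. sum_list (map monomial d) \<noteq> 0"
  shows "list_all (\<lambda>(T, _). peval g T = 0) S"
  using assms(1,2)
proof (induction H S rule: certified.induct)
  case (2 H T d C S)
  then have ok: "cert_ok H T d C" and rest: "certified (H @ [T]) S"
    by simp_all
  let ?\<delta> = "sum_list (map monomial d)"
  have "peval g (pminus (pmult (pconst d) T) (cert_expand H C)) = 0"
    using ok by (metis cert_ok_def peval_Nil peval_pnormalize)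
  then have "c ?\<delta> * peval g T = 0"
    using ok 2(3) peval_cert_expand[of H C g] by (simp add: cert_ok_def)
  moreover have "?\<delta> \<noteq> 0"
    using ok assms(3) by (simp add: cert_ok_def)
  ultimately have "c (inverse ?\<delta>) * (c ?\<delta> * peval g T) = c (inverse ?\<delta> * ?\<delta>) * peval g T"
    by (simp only: c_mult mult.assoc)
  with \<open>c ?\<delta> * peval g T = 0\<close> \<open>?\<delta> \<noteq> 0\<close> have "peval g T = 0"
    by simp
  with 2 rest show ?case
    by simp
qed simp


lemma monomial_values [simp]:
  "monomial (1, 0, 0) = 1" "monomial (1, 2, 0) = r^2" "monomial (1, 0, 2) = s^2"
  "monomial (1, 1, 1) = r * s" "monomial (1, 0, -2) = inverse (s^2)"
  "monomial (1, 2, 2) = (r * s)^2" "monomial (1, 2, 4) = (r * s^2)^2"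
  by (simp_all add: monomial.simps power_int_minus power_mult_distrib)

definition serre_A :: "'a \<Rightarrow> 'a \<Rightarrow> bool" where
  "serre_A x y \<longleftrightarrow> qcomm x (qcomm x y (r^2)) (s^2) = 0 \<and> qcomm (qcomm x y (r^2)) y (s^2) = 0"

definition serre_B :: "'a \<Rightarrow> 'a \<Rightarrow> bool" where
  "serre_B x y \<longleftrightarrow> qcomm x (qcomm x y (r^2)) (s^2) = 0
     \<and> qcomm (qcomm (qcomm x y (r^2)) y (r * s)) y (s^2) = 0"

end

locale two_parameter = laurent_scalars +
  assumes r3_neq_s3: "r^3 \<noteq> s^3" and r4_neq_s4: "r^4 \<noteq> s^4"
begin

lemma admissible_divisors_nonzero: "\<forall>d \<in> set admissible_divisors. sum_list (map monomial d) \<noteq> 0"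
proof -
  have "r^4 - s^4 = (r^2 + s^2) * (r^2 - s^2)" and "r^3 - s^3 = (r^2 + r * s + s^2) * (r - s)"
    by algebra+
  then have "r^2 + s^2 \<noteq> 0" and "r^2 + r * s + s^2 \<noteq> 0"
    using r3_neq_s3 r4_neq_s4 by auto
  then show ?thesis
    by (simp add: admissible_divisors_def monomial.simps add.commute add.left_commute)
qed

end

section \<open>Identities in rank at most four\<close>

text \<open>
In each of the following lemmas the variable x_i of the free algebra is interpreted as the i-th
entry of the list g (entry 0 is a placeholder), and the hypotheses include the definitions of
the composite generators.
\<close>

definition serre_B_root_relation_hypotheses :: "nc_poly list" where
  "serre_B_root_relation_hypotheses =
    [pminus (pvar 3) (pqcomm (pvar 1) (pvar 2) (1,2,0)),
     pminus (pvar 4) (pqcomm (pvar 3) (pvar 2) (1,1,1)),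
     pqcomm (pvar 1) (pvar 3) (1,0,2),
     pqcomm (pvar 4) (pvar 2) (1,0,2)]"

definition serre_B_root_relation_certificate :: "cert_step list" where
  "serre_B_root_relation_certificate =
    [(pqcomm (pvar 3) (pvar 4) (1,0,2), [(1,0,0)],
      [(-1,-1,1,[3],0,[2]), (-1,1,1,[],1,[1,2]), (1,-1,-1,[],2,[2,2]), (-1,1,1,[2],2,[2]),
       (-1,2,0,[2],2,[2]), (1,-1,1,[],0,[3,2]), (1,0,0,[],0,[3,2]), (1,-1,-1,[1],1,[2]),
       (-1,1,1,[4],0,[]), (1,3,1,[],3,[1]), (1,0,0,[3],1,[]), (-1,0,2,[],1,[3]),
       (1,1,1,[],1,[3]), (1,1,3,[2,3],0,[]), (1,3,3,[2],1,[1]), (1,4,2,[2,2],2,[]),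
       (-1,2,2,[2],0,[3]), (-1,0,2,[],0,[2,3]), (-1,-1,1,[1,2],1,[]), (-1,-1,-1,[1],3,[])])]"

lemma serre_B_root_relation_certified:
  "certified serre_B_root_relation_hypotheses serre_B_root_relation_certificate"
  by code_simp

lemma (in two_parameter) serre_B_root_relation:
  assumes "serre_B x y"
  shows "qcomm (qcomm x y (r^2)) (qcomm (qcomm x y (r^2)) y (r * s)) (s^2) = 0"
proof -
  define g where "g = (!) [0, x, y, qcomm x y (r^2), qcomm (qcomm x y (r^2)) y (r * s)]"
  have "list_all (\<lambda>P. peval g P = 0) serre_B_root_relation_hypotheses"
    using assms by (simp add: serre_B_root_relation_hypotheses_def g_def serre_B_def)
  from certified_sound[OF serre_B_root_relation_certified this admissible_divisors_nonzero]
  show ?thesis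
    by (simp add: serre_B_root_relation_certificate_def g_def)
qed

definition serre_A_qcomm_right_hypotheses :: "nc_poly list" where
  "serre_A_qcomm_right_hypotheses =
    [pminus (pvar 4) (pqcomm (pvar 1) (pvar 2) (1,2,0)),
     pminus (pvar 5) (pqcomm (pvar 2) (pvar 3) (1,2,0)),
     pminus (pvar 6) (pqcomm (pvar 1) (pvar 5) (1,2,0)),
     pqcomm (pvar 1) (pvar 3) (1,0,0),
     pqcomm (pvar 1) (pvar 4) (1,0,2),
     pqcomm (pvar 4) (pvar 2) (1,0,2),
     pqcomm (pvar 2) (pvar 5) (1,0,2),
     pqcomm (pvar 5) (pvar 3) (1,0,2)]"

definition serre_A_qcomm_right_certificate :: "cert_step list" where
  "serre_A_qcomm_right_certificate =
    [(pqcomm (pvar 3) (pvar 6) (1,0,-2), [(1,0,0)],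
      [(1,2,-2,[5],3,[]), (1,2,-2,[],7,[1]), (-1,0,-2,[],2,[3]), (1,0,0,[3],2,[]),
       (-1,0,0,[],3,[5]), (-1,0,-2,[1],7,[])]),
     (pqcomm (pvar 1) (pvar 6) (1,0,2), [(1,0,0)],
      [(-1,2,2,[3],0,[1]), (1,2,2,[],1,[1,1]), (1,2,2,[],3,[2,1]), (-1,2,2,[2],3,[1]),
       (1,0,2,[],0,[3,1]), (-1,0,2,[1],1,[1]), (-1,2,0,[1],1,[1]), (-1,0,2,[],2,[1]),
       (1,0,2,[4],3,[]), (1,0,0,[],4,[3]), (-1,2,0,[3],4,[]), (-1,2,0,[],3,[4]),
       (1,2,0,[1,3],0,[]), (-1,2,0,[1],3,[2]), (1,2,0,[1,2],3,[]), (-1,0,0,[1],0,[3]),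
       (1,0,0,[1,1],1,[]), (1,0,0,[1],2,[])]),
     (pqcomm (pvar 2) (pvar 6) (1,0,0), [(1,0,2), (1,2,0)],
      [(-1,2,2,[5],0,[]), (-1,4,0,[],6,[1]), (-1,0,2,[],2,[2]), (-1,2,0,[],2,[2]),
       (1,0,2,[2],2,[]), (1,2,0,[2],2,[]), (1,-2,2,[],0,[5]), (1,0,0,[],0,[5]),
       (1,0,0,[1],6,[]), (-1,4,0,[3],0,[2]), (1,4,0,[],1,[1,2]), (1,4,0,[],3,[2,2]),
       (-1,2,2,[2],3,[2]), (-1,4,0,[2],3,[2]), (1,0,2,[],0,[3,2]), (1,2,0,[],0,[3,2]),
       (-1,2,0,[1],1,[2]), (-1,-2,2,[4],1,[]), (-1,0,0,[4],1,[]), (-1,0,0,[],5,[3]),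
       (1,4,0,[3],5,[]), (1,2,2,[],1,[4]), (1,2,2,[2,3],0,[]), (-1,2,2,[2],1,[1]),
       (1,2,2,[2,2],3,[]), (-1,0,2,[2],0,[3]), (-1,-2,2,[],0,[2,3]), (1,-2,2,[1,2],1,[])]),
     (pqcomm (pvar 5) (pvar 6) (1,0,-2), [(1,0,0)],
      [(-1,0,-2,[6],1,[]), (-1,2,0,[],8,[2]), (1,0,-2,[],10,[3]), (-1,2,0,[3],10,[]),
       (1,0,0,[],1,[6]), (1,0,0,[2],8,[])]),
     (pqcomm (pvar 6) (pvar 5) (1,0,2), [(1,0,0)],
      [(-1,0,2,[],11,[])])]"

lemma serre_A_qcomm_right_certified:
  "certified serre_A_qcomm_right_hypotheses serre_A_qcomm_right_certificate"
  by code_simp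

lemma (in two_parameter) serre_A_qcomm_right:
  assumes "x * z = z * x" and "serre_A x y" and "serre_A y z"
  shows "serre_A x (qcomm y z (r^2))"
proof -
  define g where "g = (!) [0, x, y, z, qcomm x y (r^2), qcomm y z (r^2), qcomm x (qcomm y z (r^2)) (r^2)]"
  have "list_all (\<lambda>P. peval g P = 0) serre_A_qcomm_right_hypotheses"
    using assms by (simp add: serre_A_qcomm_right_hypotheses_def g_def serre_A_def qcomm_one_eq_0_iff)
  from certified_sound[OF serre_A_qcomm_right_certified this admissible_divisors_nonzero]
  show ?thesis
    by (simp add: serre_A_qcomm_right_certificate_def g_def serre_A_def)
qed

definition serre_B_qcomm_left_hypotheses :: "nc_poly list" where
  "serre_B_qcomm_left_hypotheses =
    [pminus (pvar 4) (pqcomm (pvar 1) (pvar 2) (1,2,0)),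
     pminus (pvar 5) (pqcomm (pvar 2) (pvar 3) (1,2,0)),
     pminus (pvar 6) (pqcomm (pvar 5) (pvar 3) (1,1,1)),
     pminus (pvar 7) (pqcomm (pvar 4) (pvar 3) (1,2,0)),
     pminus (pvar 8) (pqcomm (pvar 7) (pvar 3) (1,1,1)),
     pqcomm (pvar 1) (pvar 3) (1,0,0),
     pqcomm (pvar 1) (pvar 4) (1,0,2),
     pqcomm (pvar 4) (pvar 2) (1,0,2),
     pqcomm (pvar 2) (pvar 5) (1,0,2),
     pqcomm (pvar 6) (pvar 3) (1,0,2)]"

definition serre_B_qcomm_left_certificate :: "cert_step list" where
  "serre_B_qcomm_left_certificate =
    [(pqcomm (pvar 1) (pvar 7) (1,0,2), [(1,0,0)],
      [(1,0,2,[4],5,[]), (-1,0,2,[],3,[1]), (1,0,0,[],6,[3]), (-1,2,0,[3],6,[]),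
       (-1,2,0,[],5,[4]), (1,0,0,[1],3,[])]),
     (pqcomm (pvar 2) (pvar 7) (1,0,0), [(1,0,2), (1,2,0)],
      [(-1,0,2,[],3,[2]), (-1,2,0,[],3,[2]), (-1,0,0,[],7,[3]), (1,4,0,[3],7,[]),
       (1,2,2,[],1,[4]), (1,0,2,[2],3,[]), (1,2,0,[2],3,[]), (1,2,2,[3],0,[2]),
       (-1,2,2,[],1,[1,2]), (-1,2,2,[],5,[2,2]), (1,2,2,[2],5,[2]), (1,4,0,[2],5,[2]),
       (-1,0,2,[],0,[3,2]), (-1,2,0,[],0,[3,2]), (1,0,2,[1],1,[2]), (-1,2,2,[5],0,[]),
       (-1,4,0,[],8,[1]), (-1,4,0,[2,3],0,[]), (1,4,0,[2],1,[1]), (-1,4,0,[2,2],5,[]),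
       (1,2,0,[2],0,[3]), (1,0,0,[],0,[2,3]), (-1,0,0,[1,2],1,[]), (1,0,0,[1],8,[])]),
     (pqcomm (pvar 4) (pvar 7) (1,0,2), [(1,0,0)],
      [(-1,0,2,[7],0,[]), (-1,2,2,[],11,[1]), (1,0,0,[],10,[2]), (-1,2,0,[2],10,[]),
       (1,0,0,[],0,[7]), (1,0,0,[1],11,[])]),
     (pqcomm (pvar 3) (pvar 8) (1,0,-2), [(1,0,0)],
      [(1,3,1,[3,3,3],0,[]), (-1,3,1,[3,3],1,[1]), (-1,3,1,[3,3],5,[2]), (-1,1,1,[3],1,[3,1]),
       (-1,3,1,[3],5,[3,2]), (-1,-1,1,[],1,[3,3,1]), (-1,3,1,[],5,[3,3,2]), (1,-1,1,[2,3,3],5,[]),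
       (-1,0,0,[2,3],5,[3]), (-1,1,-1,[2,3],5,[3]), (1,2,-2,[2],5,[3,3]), (-1,0,-2,[],0,[3,3,3]),
       (1,1,1,[1,3,3],1,[]), (-1,0,0,[1,3],1,[3]), (-1,1,-1,[1,3],1,[3]), (1,0,-2,[1],1,[3,3]),
       (-1,-1,1,[],2,[3,1]), (-1,0,-2,[],3,[3,3]), (1,2,0,[3],2,[1]), (1,0,0,[3],3,[3]),
       (1,1,-1,[3],3,[3]), (1,0,0,[3],0,[3,3]), (1,1,-1,[3],0,[3,3]), (1,2,-2,[3],0,[3,3]),
       (-1,0,0,[],1,[1,3,3]), (-1,1,-1,[],1,[1,3,3]), (-1,2,-2,[],1,[1,3,3]), (-1,0,0,[],5,[2,3,3]),
       (-1,1,-1,[],5,[2,3,3]), (-1,2,-2,[],5,[2,3,3]), (1,0,0,[5],5,[3]), (1,1,-1,[5],5,[3]),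
       (1,2,-2,[5],5,[3]), (1,-1,1,[],2,[1,3]), (-1,2,-2,[],2,[1,3]), (-1,0,2,[3,5],5,[]),
       (-1,1,1,[3,5],5,[]), (-1,2,0,[3,5],5,[]), (-1,1,1,[3,3],3,[]), (1,0,-2,[1],2,[3]),
       (-1,0,0,[1,3],2,[]), (-1,0,-2,[],4,[3]), (1,2,-2,[],9,[1]), (-1,-1,1,[6],5,[]),
       (1,2,-2,[6],5,[]), (1,0,0,[3],4,[]), (-1,1,1,[3,3],0,[3]), (-1,2,0,[3,3],0,[3]),
       (-1,3,-1,[3,3],0,[3]), (1,1,1,[3],1,[1,3]), (1,2,0,[3],1,[1,3]), (1,3,-1,[3],1,[1,3]),
       (1,1,1,[3],5,[2,3]), (1,2,0,[3],5,[2,3]), (1,3,-1,[3],5,[2,3]), (1,-1,1,[],1,[3,1,3]),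
       (1,0,0,[],1,[3,1,3]), (1,1,-1,[],1,[3,1,3]), (1,1,1,[],5,[3,2,3]), (1,2,0,[],5,[3,2,3]),
       (1,3,-1,[],5,[3,2,3]), (-1,0,-2,[1],9,[])]),
     (pqcomm (pvar 8) (pvar 3) (1,0,2), [(1,0,0)],
      [(-1,0,2,[],13,[])])]"

lemma serre_B_qcomm_left_certified:
  "certified serre_B_qcomm_left_hypotheses serre_B_qcomm_left_certificate"
  by code_simp

lemma (in two_parameter) serre_B_qcomm_left:
  assumes "x * z = z * x" and "serre_A x y" and "serre_B y z"
  shows "serre_B (qcomm x y (r^2)) z"
proof -
  define g where "g = (!) [0, x, y, z, qcomm x y (r^2), qcomm y z (r^2),
    qcomm (qcomm y z (r^2)) z (r * s), qcomm (qcomm x y (r^2)) z (r^2),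
    qcomm (qcomm (qcomm x y (r^2)) z (r^2)) z (r * s)]"
  have "list_all (\<lambda>P. peval g P = 0) serre_B_qcomm_left_hypotheses"
    using assms by (simp add: serre_B_qcomm_left_hypotheses_def g_def serre_A_def serre_B_def qcomm_one_eq_0_iff)
  from certified_sound[OF serre_B_qcomm_left_certified this admissible_divisors_nonzero]
  show ?thesis
    by (simp add: serre_B_qcomm_left_certificate_def g_def serre_B_def)
qed

definition serre_B3_relations_hypotheses :: "nc_poly list" where
  "serre_B3_relations_hypotheses =
    [pminus (pvar 4) (pqcomm (pvar 2) (pvar 3) (1,2,0)),
     pminus (pvar 5) (pqcomm (pvar 1) (pvar 4) (1,2,0)),
     pminus (pvar 6) (pqcomm (pvar 5) (pvar 3) (1,1,1)),
     pminus (pvar 7) (pqcomm (pvar 6) (pvar 2) (1,0,-2)),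
     pminus (pvar 8) (pqcomm (pvar 4) (pvar 3) (1,1,1)),
     pminus (pvar 9) (pqcomm (pvar 1) (pvar 2) (1,2,0)),
     pqcomm (pvar 1) (pvar 3) (1,0,0),
     pqcomm (pvar 9) (pvar 2) (1,0,2),
     pqcomm (pvar 2) (pvar 4) (1,0,2),
     pqcomm (pvar 8) (pvar 3) (1,0,2)]"

definition serre_B3_relations_certificate :: "cert_step list" where
  "serre_B3_relations_certificate =
    [(pqcomm (pvar 3) (pvar 6) (1,0,-2), [(1,0,0)],
      [(1,2,-2,[4],6,[3]), (-1,2,-2,[],4,[1,3]), (-1,0,-2,[],1,[3,3]), (1,0,0,[3],1,[3]),
       (1,1,-1,[3],1,[3]), (-1,0,0,[],6,[4,3]), (-1,1,-1,[],6,[4,3]), (1,0,-2,[1],4,[3]),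
       (1,2,-2,[8],6,[]), (1,2,-2,[],9,[1]), (-1,0,-2,[],2,[3]), (-1,2,0,[3,4],6,[]),
       (1,2,0,[3],4,[1]), (-1,1,1,[3,3],1,[]), (1,1,1,[3],6,[4]), (1,1,1,[],6,[3,4]),
       (-1,0,0,[1,3],4,[]), (1,0,0,[3],2,[]), (-1,0,-2,[1],9,[])]),
     (pqcomm (pvar 4) (pvar 8) (1,0,2), [(1,0,0)],
      [(-1,-1,1,[4],0,[3]), (-1,1,1,[],4,[2,3]), (1,-1,-1,[],8,[3,3]), (-1,1,1,[3],8,[3]),
       (-1,2,0,[3],8,[3]), (1,-1,1,[],0,[4,3]), (1,0,0,[],0,[4,3]), (1,-1,-1,[2],4,[3]),
       (-1,1,1,[8],0,[]), (1,3,1,[],9,[2]), (1,0,0,[4],4,[]), (-1,0,2,[],4,[4]),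
       (1,1,1,[],4,[4]), (1,1,3,[3,4],0,[]), (1,3,3,[3],4,[2]), (1,4,2,[3,3],8,[]),
       (-1,2,2,[3],0,[4]), (-1,0,2,[],0,[3,4]), (-1,-1,1,[2,3],4,[]), (-1,-1,-1,[2],9,[])]),
     (pqcomm (pvar 2) (pvar 5) (1,0,0), [(1,0,2), (1,2,0)],
      [(-1,4,0,[3],5,[2]), (1,4,0,[],0,[1,2]), (1,4,0,[],6,[2,2]), (-1,2,2,[2],6,[2]),
       (-1,4,0,[2],6,[2]), (1,0,2,[],5,[3,2]), (1,2,0,[],5,[3,2]), (-1,2,0,[1],0,[2]),
       (-1,-2,2,[9],0,[]), (-1,0,0,[9],0,[]), (-1,0,0,[],7,[3]), (-1,0,2,[],1,[2]),
       (-1,2,0,[],1,[2]), (1,4,0,[3],7,[]), (1,2,2,[],0,[9]), (1,2,2,[2,3],5,[]),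
       (-1,2,2,[2],0,[1]), (1,2,2,[2,2],6,[]), (-1,0,2,[2],5,[3]), (-1,-2,2,[],5,[2,3]),
       (1,-2,2,[1,2],0,[]), (1,0,2,[2],1,[]), (1,2,0,[2],1,[]), (1,-2,2,[],5,[4]),
       (1,0,0,[],5,[4]), (-1,2,2,[4],5,[]), (-1,4,0,[],8,[1]), (1,0,0,[1],8,[])]),
     (pminus (pqcomm (pvar 5) (pvar 4) (1,1,1)) (pqcomm (pvar 2) (pvar 6) (1,2,0)), [(1,0,0)],
      [(1,0,0,[5],0,[]), (1,2,0,[],2,[2]), (-1,0,0,[],12,[3]), (1,3,1,[3],12,[]),
       (-1,1,1,[],0,[5]), (-1,0,0,[2],2,[])]),
     (pqcomm (pvar 4) (pvar 6) (1,0,0), [(1,0,2), (1,1,1), (1,2,0)],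
      [(-1,4,0,[4,4],6,[]), (1,4,0,[4],4,[1]), (1,2,0,[4],1,[3]), (1,5,1,[],4,[4,1]),
       (1,0,0,[],1,[4,3]), (-1,4,2,[3,4],1,[]), (1,1,3,[3],1,[4]), (-1,1,3,[],6,[4,4]),
       (-1,0,0,[1,4],4,[]), (1,0,2,[1],4,[4]), (-1,4,0,[],11,[1]), (-1,0,0,[],13,[3]),
       (1,2,2,[4],6,[4]), (1,3,1,[4],6,[4]), (-1,2,2,[],4,[1,4]), (-1,3,1,[],4,[1,4]),
       (-1,0,2,[],1,[3,4]), (-1,1,1,[],1,[3,4]), (-1,2,2,[8],1,[]), (-1,3,1,[8],1,[]),
       (-1,0,2,[],2,[4]), (-1,1,1,[],2,[4]), (1,1,1,[4],2,[]), (1,2,0,[4],2,[]),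
       (1,2,2,[],4,[5]), (1,3,1,[],4,[5]), (1,2,2,[3],13,[]), (1,0,2,[],0,[6]),
       (1,0,2,[2],10,[]), (1,0,0,[1],11,[]), (-1,2,0,[6],0,[]), (-1,4,2,[],10,[2])]),
     (pqcomm (pvar 6) (pvar 4) (1,0,0), [(1,0,0)],
      [(-1,0,0,[],14,[])]),
     (pqcomm (pvar 4) (pvar 7) (1,0,-2), [(1,0,0)],
      [(-1,0,-2,[6],8,[]), (1,0,0,[],14,[2]), (-1,0,-2,[],3,[4]), (1,0,0,[4],3,[]),
       (1,0,-4,[],8,[6]), (-1,0,-4,[2],14,[])]),
     (pqcomm (pvar 7) (pvar 4) (1,0,2), [(1,0,0)],
      [(-1,0,2,[],16,[])]),
     (pqcomm (pvar 6) (pvar 8) (1,0,2), [(1,0,0)],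
      [(1,0,0,[6],4,[]), (-1,0,0,[],14,[3]), (1,1,3,[],10,[4]), (-1,0,2,[4],10,[]),
       (-1,0,2,[],4,[6]), (1,1,3,[3],14,[])]),
     (pqcomm (pvar 3) (pvar 7) (1,-2,-2), [(1,0,0)],
      [(1,-2,-2,[6],0,[]), (1,0,0,[],10,[2]), (-1,-2,-2,[],3,[3]), (1,0,0,[3],3,[]),
       (-1,-2,-2,[],0,[6]), (-1,-2,-2,[2],10,[]), (1,-2,-2,[],14,[])]),
     (pqcomm (pvar 7) (pvar 3) (1,2,2), [(1,0,0)],
      [(-1,2,2,[],19,[])]),
     (pqcomm (pvar 7) (pvar 8) (1,2,4), [(1,0,0)],
      [(1,0,0,[7],4,[]), (-1,0,2,[],16,[3]), (1,3,3,[],19,[4]), (-1,2,4,[4],19,[]),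
       (-1,2,4,[],4,[7]), (1,3,5,[3],16,[])])]"

lemma serre_B3_relations_certified:
  "certified serre_B3_relations_hypotheses serre_B3_relations_certificate"
  by code_simp

text \<open>
For x, y, z = e_{n-2}, e_{n-1}, e_n the elements u, u', v, v', v'' are the root vectors
E_{n-1,n}, E_{n-1,n'}, E_{n-2,n}, E_{n-2,n'} and E_{n-2,(n-1)'}.
\<close>

lemma (in two_parameter) serre_B3_relations:
  assumes "x * z = z * x" and "serre_A x y" and "serre_B y z"
  defines "u \<equiv> qcomm y z (r^2)" and "u' \<equiv> qcomm (qcomm y z (r^2)) z (r * s)"
    and "v \<equiv> qcomm x (qcomm y z (r^2)) (r^2)"
    and "v' \<equiv> qcomm (qcomm x (qcomm y z (r^2)) (r^2)) z (r * s)"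
    and "v'' \<equiv> qcomm (qcomm (qcomm x (qcomm y z (r^2)) (r^2)) z (r * s)) y (inverse (s^2))"
  shows "qcomm v u (r * s) = qcomm y v' (r^2)"
    and "qcomm v'' z ((r * s)^2) = 0"
    and "qcomm v' u 1 = 0"
    and "qcomm v' u' (s^2) = 0"
    and "qcomm v'' u (s^2) = 0"
    and "qcomm v'' u' ((r * s^2)^2) = 0"
proof -
  define g where "g = (!) [0, x, y, z, u, v, v', v'', u', qcomm x y (r^2)]"
  have "list_all (\<lambda>P. peval g P = 0) serre_B3_relations_hypotheses"
    using assms by (simp add: serre_B3_relations_hypotheses_def g_def serre_A_def serre_B_def qcomm_one_eq_0_iff)
  from certified_sound[OF serre_B3_relations_certified this admissible_divisors_nonzero]
  show "qcomm v u (r * s) = qcomm y v' (r^2)"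
    and "qcomm v'' z ((r * s)^2) = 0"
    and "qcomm v' u 1 = 0"
    and "qcomm v' u' (s^2) = 0"
    and "qcomm v'' u (s^2) = 0"
    and "qcomm v'' u' ((r * s^2)^2) = 0"
    by (simp_all add: serre_B3_relations_certificate_def g_def)
qed

definition serre_B4_commute_hypotheses :: "nc_poly list" where
  "serre_B4_commute_hypotheses =
    [pminus (pvar 5) (pqcomm (pvar 3) (pvar 4) (1,2,0)),
     pminus (pvar 6) (pqcomm (pvar 2) (pvar 5) (1,2,0)),
     pminus (pvar 7) (pqcomm (pvar 1) (pvar 6) (1,2,0)),
     pminus (pvar 8) (pqcomm (pvar 7) (pvar 4) (1,1,1)),
     pminus (pvar 9) (pqcomm (pvar 1) (pvar 2) (1,2,0)),
     pminus (pvar 10) (pqcomm (pvar 2) (pvar 3) (1,2,0)),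
     pqcomm (pvar 1) (pvar 3) (1,0,0),
     pqcomm (pvar 1) (pvar 4) (1,0,0),
     pqcomm (pvar 2) (pvar 4) (1,0,0),
     pqcomm (pvar 9) (pvar 2) (1,0,2),
     pqcomm (pvar 2) (pvar 10) (1,0,2)]"

definition serre_B4_commute_certificate :: "cert_step list" where
  "serre_B4_commute_certificate =
    [(pqcomm (pvar 1) (pvar 5) (1,0,0), [(1,0,0)],
      [(-1,2,0,[4],6,[]), (-1,0,0,[],0,[1]), (-1,2,0,[],7,[3]), (1,0,0,[3],7,[]),
       (1,0,0,[],6,[4]), (1,0,0,[1],0,[])]),
     (pqcomm (pvar 2) (pvar 6) (1,0,2), [(1,0,0)],
      [(-1,2,2,[4],5,[2]), (1,2,2,[],0,[2,2]), (1,2,2,[],8,[3,2]), (-1,2,2,[3],8,[2]),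
       (1,0,2,[],5,[4,2]), (-1,0,2,[2],0,[2]), (-1,2,0,[2],0,[2]), (1,0,2,[10],8,[]),
       (1,0,0,[],10,[4]), (-1,0,2,[],1,[2]), (-1,2,0,[4],10,[]), (-1,2,0,[],8,[10]),
       (1,2,0,[2,4],5,[]), (-1,2,0,[2],8,[3]), (1,2,0,[2,3],8,[]), (-1,0,0,[2],5,[4]),
       (1,0,0,[2,2],0,[]), (1,0,0,[2],1,[])]),
     (pqcomm (pvar 2) (pvar 7) (1,0,0), [(1,0,2), (1,2,0)],
      [(-1,4,0,[5],4,[2]), (1,4,0,[],1,[1,2]), (1,4,0,[],11,[2,2]), (-1,2,2,[2],11,[2]),
       (-1,4,0,[2],11,[2]), (1,0,2,[],4,[5,2]), (1,2,0,[],4,[5,2]), (-1,2,0,[1],1,[2]),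
       (-1,-2,2,[9],1,[]), (-1,0,0,[9],1,[]), (-1,0,0,[],9,[5]), (-1,0,2,[],2,[2]),
       (-1,2,0,[],2,[2]), (1,4,0,[5],9,[]), (1,2,2,[],1,[9]), (1,2,2,[2,5],4,[]),
       (-1,2,2,[2],1,[1]), (1,2,2,[2,2],11,[]), (-1,0,2,[2],4,[5]), (-1,-2,2,[],4,[2,5]),
       (1,-2,2,[1,2],1,[]), (1,0,2,[2],2,[]), (1,2,0,[2],2,[]), (1,-2,2,[],4,[6]),
       (1,0,0,[],4,[6]), (-1,2,2,[6],4,[]), (-1,4,0,[],12,[1]), (1,0,0,[1],12,[])]),
     (pqcomm (pvar 2) (pvar 8) (1,0,0), [(1,0,0)],
      [(1,0,0,[7],8,[]), (-1,0,0,[],3,[2]), (1,0,0,[],13,[4]), (-1,1,1,[4],13,[]),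
       (-1,1,1,[],8,[7]), (1,0,0,[2],3,[])])]"

lemma serre_B4_commute_certified:
  "certified serre_B4_commute_hypotheses serre_B4_commute_certificate"
  by code_simp

lemma (in two_parameter) serre_B4_commute:
  assumes "x1 * x3 = x3 * x1" and "x1 * x4 = x4 * x1" and "x2 * x4 = x4 * x2"
    and "serre_A x1 x2" and "serre_A x2 x3"
  defines "u \<equiv> qcomm (qcomm x1 (qcomm x2 (qcomm x3 x4 (r^2)) (r^2)) (r^2)) x4 (r * s)"
  shows "x2 * u = u * x2"
proof -
  define g where "g = (!) [0, x1, x2, x3, x4, qcomm x3 x4 (r^2), qcomm x2 (qcomm x3 x4 (r^2)) (r^2),
    qcomm x1 (qcomm x2 (qcomm x3 x4 (r^2)) (r^2)) (r^2), u, qcomm x1 x2 (r^2), qcomm x2 x3 (r^2)]"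
  have "list_all (\<lambda>P. peval g P = 0) serre_B4_commute_hypotheses"
    using assms by (simp add: serre_B4_commute_hypotheses_def g_def serre_A_def qcomm_one_eq_0_iff)
  from certified_sound[OF serre_B4_commute_certified this admissible_divisors_nonzero]
  show ?thesis
    by (simp add: serre_B4_commute_certificate_def g_def qcomm_one_eq_0_iff)
qed

section \<open>Root vectors of U_{r,s}(so_{2n+1})\<close>

locale Urs_algebra = two_parameter c r s for c :: "complex \<Rightarrow> 'a::ring_1" and r s +
  fixes n :: nat and e f w wp winv wpinv :: "nat \<Rightarrow> 'a"
  assumes n_ge_2: "n \<ge> 2" and relations: "Urs_rel n r s c e f w wp winv wpinv"
begin

abbreviation E :: "nat \<Rightarrow> nat \<Rightarrow> 'a" where
  "E i j \<equiv> RE c r e i j"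

abbreviation E' :: "nat \<Rightarrow> nat \<Rightarrow> 'a" where
  "E' i j \<equiv> REp n c r s e i j"

lemma winv_w: "i \<in> {1..n} \<Longrightarrow> winv i * w i = 1"
  using relations unfolding Urs_rel_def by blast

lemma serre_relation:
  "i \<in> {1..n} \<Longrightarrow> j \<in> {1..n} \<Longrightarrow> i \<noteq> j \<Longrightarrow> ((adl e w winv i) ^^ nat (1 - cartanB n i j)) (e j) = 0"
  using relations unfolding Urs_rel_def by blast

definition w_conj :: "nat \<Rightarrow> 'a \<Rightarrow> 'a" where
  "w_conj j x = w j * x * winv j"

lemma w_conj_e: "i \<in> {1..n} \<Longrightarrow> j \<in> {1..n} \<Longrightarrow> w_conj j (e i) = c (pairB n r s i j) * e i"
  using relations unfolding Urs_rel_def w_conj_def by blast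

lemma w_conj_qcomm:
  assumes "j \<in> {1..n}" and "w_conj j x = c \<alpha> * x" and "w_conj j y = c \<beta> * y"
  shows "w_conj j (qcomm x y q) = c (\<alpha> * \<beta>) * qcomm x y q"
proof -
  have "winv j * (w j * z) = z" for z
    using winv_w[OF assms(1)] by (simp flip: mult.assoc)
  then have mult: "w_conj j (a * b) = w_conj j a * w_conj j b" for a b
    by (simp add: w_conj_def mult.assoc)
  have linear: "w_conj j (a - b) = w_conj j a - w_conj j b" "w_conj j (c q * a) = c q * w_conj j a"
    for a b by (simp_all add: w_conj_def algebra_simps c_left_commute)
  have "w_conj j (qcomm x y q) = qcomm (c \<alpha> * x) (c \<beta> * y) q"
    unfolding qcomm_def linear by (simp only: mult assms(2,3))
  also have "\<dots> = c (\<alpha> * \<beta>) * qcomm x y q"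
    unfolding qcomm_def by (simp add: algebra_simps scalar_normalize)
  finally show ?thesis .
qed

lemma adl_eq_qcomm: "w_conj i b = c \<alpha> * b \<Longrightarrow> adl e w winv i b = qcomm (e i) b \<alpha>"
  by (simp add: adl_def w_conj_def qcomm_def mult.assoc)

lemma adl_qcomm:
  assumes "i \<in> {1..n}" and "w_conj i x = c \<alpha> * x" and "w_conj i y = c \<beta> * y"
  shows "adl e w winv i (qcomm x y q) = qcomm (e i) (qcomm x y q) (\<alpha> * \<beta>)"
  by (rule adl_eq_qcomm) (rule w_conj_qcomm[OF assms])

lemma adl_funpow_2:
  assumes "i \<in> {1..n}" and "w_conj i (e i) = c \<alpha> * e i" and "w_conj i y = c \<beta> * y"
  shows "((adl e w winv i) ^^ 2) y = qcomm (e i) (qcomm (e i) y \<beta>) (\<alpha> * \<beta>)"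
  using adl_qcomm[OF assms] by (simp add: numeral_2_eq_2 adl_eq_qcomm[OF assms(3)])

lemma adl_funpow_3:
  assumes "i \<in> {1..n}" and "w_conj i (e i) = c \<alpha> * e i" and "w_conj i y = c \<beta> * y"
  shows "((adl e w winv i) ^^ 3) y
    = qcomm (e i) (qcomm (e i) (qcomm (e i) y \<beta>) (\<alpha> * \<beta>)) (\<alpha> * (\<alpha> * \<beta>))"
  using adl_qcomm[OF assms(1,2) w_conj_qcomm[OF assms]] adl_funpow_2[OF assms]
  by (simp add: numeral_3_eq_3 numeral_2_eq_2)

lemma e_commute:
  assumes "1 \<le> i" and "i + 2 \<le> j" and "j \<le> n"
  shows "e i * e j = e j * e i"
proof -
  have ij: "i \<in> {1..n}" "j \<in> {1..n}"
    using assms by auto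
  have "cartanB n i j = 0" and "pairB n r s j i = 1"
    using assms by (auto simp: cartanB_def pairB_def)
  then have "adl e w winv i (e j) = 0" and "adl e w winv i (e j) = qcomm (e i) (e j) 1"
    using serre_relation[OF ij] assms by (simp, intro adl_eq_qcomm, simp add: w_conj_e[OF ij(2,1)])
  then show ?thesis
    by (simp add: qcomm_one_eq_0_iff)
qed

lemma serre_A_e:
  assumes "1 \<le> i" and "i + 2 \<le> n"
  shows "serre_A (e i) (e (i + 1))"
proof -
  let ?x = "e i" and ?y = "e (i + 1)"
  have ij: "i \<in> {1..n}" "i + 1 \<in> {1..n}"
    using assms by auto
  have "pairB n r s i i = r^2 * inverse (s^2)" "pairB n r s (i + 1) i = s^2"
    "pairB n r s i (i + 1) = inverse (r^2)" "pairB n r s (i + 1) (i + 1) = r^2 * inverse (s^2)"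
    "cartanB n i (i + 1) = -1" "cartanB n (i + 1) i = -1"
    using assms by (auto simp: pairB_def cartanB_def)
  then have conj: "w_conj i ?x = c (r^2 * inverse (s^2)) * ?x" "w_conj i ?y = c (s^2) * ?y"
    "w_conj (i + 1) ?x = c (inverse (r^2)) * ?x" "w_conj (i + 1) ?y = c (r^2 * inverse (s^2)) * ?y"
    and "((adl e w winv i) ^^ 2) ?y = 0" "((adl e w winv (i + 1)) ^^ 2) ?x = 0"
    using ij serre_relation[OF ij] serre_relation[OF ij(2,1)] by (simp_all add: w_conj_e)
  moreover have "((adl e w winv i) ^^ 2) ?y = qcomm ?x (qcomm ?x ?y (s^2)) (r^2)"
    using adl_funpow_2[OF ij(1) conj(1,2)] s_nonzero by (simp add: mult.assoc)
  moreover have "((adl e w winv (i + 1)) ^^ 2) ?x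
      = qcomm ?y (qcomm ?y ?x (inverse (r^2))) (inverse (s^2))"
    using adl_funpow_2[OF ij(2) conj(4,3)] r_nonzero by (simp add: field_simps)
  moreover have "r^2 \<noteq> 0" "s^2 \<noteq> 0"
    using r_nonzero s_nonzero by simp_all
  ultimately show ?thesis
    unfolding serre_A_def qcomm_qcomm_symmetric[of ?x ?y "r^2"] by (simp add: qcomm_qcomm_reverse)
qed

lemma serre_B_e: "serre_B (e (n - 1)) (e n)"
proof -
  let ?x = "e (n - 1)" and ?y = "e n"
  have ij: "n - 1 \<in> {1..n}" "n \<in> {1..n}"
    using n_ge_2 by auto
  have "pairB n r s (n - 1) (n - 1) = r^2 * inverse (s^2)" "pairB n r s n (n - 1) = s^2"
    "pairB n r s (n - 1) n = inverse (r^2)" "pairB n r s n n = r * inverse s"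
    "cartanB n (n - 1) n = -1" "cartanB n n (n - 1) = -2"
    using n_ge_2 by (auto simp: pairB_def cartanB_def)
  then have conj: "w_conj (n - 1) ?x = c (r^2 * inverse (s^2)) * ?x" "w_conj (n - 1) ?y = c (s^2) * ?y"
    "w_conj n ?x = c (inverse (r^2)) * ?x" "w_conj n ?y = c (r * inverse s) * ?y"
    and "((adl e w winv (n - 1)) ^^ 2) ?y = 0" "((adl e w winv n) ^^ 3) ?x = 0"
    using ij n_ge_2 serre_relation[OF ij] serre_relation[OF ij(2,1)] by (simp_all add: w_conj_e)
  moreover have "((adl e w winv (n - 1)) ^^ 2) ?y = qcomm ?x (qcomm ?x ?y (s^2)) (r^2)"
    using adl_funpow_2[OF ij(1) conj(1,2)] s_nonzero by (simp add: mult.assoc)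
  moreover have "((adl e w winv n) ^^ 3) ?x
      = qcomm ?y (qcomm ?y (qcomm ?y ?x (inverse (r^2))) (inverse (r * s))) (inverse (s^2))"
    using adl_funpow_3[OF ij(2) conj(4,3)] r_nonzero s_nonzero by (simp add: field_simps power2_eq_square)
  moreover have "r^2 \<noteq> 0" "r * s \<noteq> 0" "s^2 \<noteq> 0"
    using r_nonzero s_nonzero by simp_all
  ultimately show ?thesis
    unfolding serre_B_def qcomm_qcomm_symmetric[of ?x ?y "r^2"] by (simp add: qcomm_qcomm_qcomm_reverse)
qed

lemma RE_same [simp]: "E i i = e i"
  by (simp add: RE_def)

lemma RE_step: "i < j \<Longrightarrow> E i j = qcomm (e i) (E (i + 1) j) (r^2)"
  by (simp add: RE_def qcomm_def mult.assoc flip: Suc_diff_Suc)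

lemma RE_right:
  assumes "1 \<le> i" and "i < j" and "j \<le> n"
  shows "E i j = qcomm (E i (j - 1)) (e j) (r^2)"
  using assms
proof (induction "j - i" arbitrary: i rule: less_induct)
  case (less i)
  show ?case
  proof (cases "j = i + 1")
    case True
    then show ?thesis
      by (simp add: RE_step)
  next
    case False
    then have "i + 1 < j"
      using less.prems by simp
    then have "E i j = qcomm (e i) (qcomm (E (i + 1) (j - 1)) (e j) (r^2)) (r^2)"
      using less RE_step[of i j] by simp
    also have "\<dots> = qcomm (qcomm (e i) (E (i + 1) (j - 1)) (r^2)) (e j) (r^2)"
      using e_commute[of i j] less.prems \<open>i + 1 < j\<close> by (simp add: qcomm_assoc)
    also have "qcomm (e i) (E (i + 1) (j - 1)) (r^2) = E i (j - 1)"
      using RE_step[of i "j - 1"] \<open>i + 1 < j\<close> by simp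
    finally show ?thesis .
  qed
qed

lemma RE_commute:
  assumes "i \<le> j" and "\<And>t. i \<le> t \<Longrightarrow> t \<le> j \<Longrightarrow> e t * x = x * e t"
  shows "E i j * x = x * E i j"
  using assms
proof (induction "j - i" arbitrary: i)
  case (Suc d)
  then have "E (i + 1) j * x = x * E (i + 1) j" and "e i * x = x * e i" and "i < j"
    by simp_all
  then show ?case
    by (simp add: RE_step qcomm_commute)
qed simp

lemma REp_top: "E' i n = qcomm (E i n) (e n) (r * s)"
  by (simp add: REp_def qcomm_def mult.assoc)

lemma REp_step:
  assumes "j < n"
  shows "E' i j = qcomm (E' i (j + 1)) (e j) (inverse (s^2))"
proof -
  have "n - j = Suc (n - (j + 1))" and "n - Suc (n - (j + 1)) = j"
    using assms by arith+
  then show ?thesis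
    unfolding REp_def by (simp only: Epk.simps qcomm_def mult.assoc)
qed

lemma REp_left:
  assumes "1 \<le> i" and "i + 1 < j" and "j \<le> n"
  shows "E' i j = qcomm (e i) (E' (i + 1) j) (r^2)"
  using assms
proof (induction "n - j" arbitrary: j)
  case 0
  then have "j = n" and "i < n" and commute: "e i * e n = e n * e i"
    using e_commute[of i n] by simp_all
  then show ?case
    unfolding \<open>j = n\<close> REp_top RE_step[OF \<open>i < n\<close>] qcomm_assoc[OF commute] by simp
next
  case (Suc d)
  then have "j < n" and commute: "e i * e j = e j * e i"
    using e_commute[of i j] by simp_all
  with Suc show ?case
    unfolding REp_step[OF \<open>j < n\<close>] by (simp add: qcomm_assoc[OF commute])
qed

lemma REp_commute:
  assumes "i \<le> j" and "j \<le> n" and "\<And>t. i \<le> t \<Longrightarrow> t \<le> n \<Longrightarrow> e t * x = x * e t"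
  shows "E' i j * x = x * E' i j"
  using assms
proof (induction "n - j" arbitrary: j)
  case 0
  then have "j = n" and "e n * x = x * e n" and "E i n * x = x * E i n"
    using RE_commute[of i n x] by simp_all
  then show ?case
    unfolding \<open>j = n\<close> REp_top by (simp add: qcomm_commute)
next
  case (Suc d)
  then show ?case
    by (simp add: REp_step qcomm_commute)
qed

lemma REp_qcomm_left:
  assumes "qcomm (E' k j) x q = 0" and "1 \<le> i" and "i \<le> k" and "k < j" and "j \<le> n"
    and "\<And>t. i \<le> t \<Longrightarrow> t < k \<Longrightarrow> e t * x = x * e t"
  shows "qcomm (E' i j) x q = 0"
  using assms(2-)
proof (induction "k - i" arbitrary: i)
  case 0
  then show ?case
    using assms(1) by simp
next
  case (Suc d)
  then have "qcomm (E' (i + 1) j) x q = 0" and "i + 1 < j" and commute: "e i * x = x * e i"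
    by simp_all
  with Suc.prems show ?case
    unfolding REp_left[OF \<open>1 \<le> i\<close> \<open>i + 1 < j\<close> \<open>j \<le> n\<close>] qcomm_assoc[OF commute] by simp
qed

lemma REp_qcomm_right:
  assumes "qcomm (E' i m) x q = 0" and "j \<le> m" and "m \<le> n"
    and "\<And>t. j \<le> t \<Longrightarrow> t < m \<Longrightarrow> e t * x = x * e t"
  shows "qcomm (E' i j) x q = 0"
  using assms(2-)
proof (induction "m - j" arbitrary: j)
  case 0
  then show ?case
    using assms(1) by simp
next
  case (Suc d)
  then have "qcomm (E' i (j + 1)) x q = 0" and "j < n" and commute: "e j * x = x * e j"
    by simp_all
  then show ?case
    unfolding REp_step[OF \<open>j < n\<close>] qcomm_exchange_right[OF commute] by simp
qed

lemma e_RE_commute: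
  assumes "1 \<le> t" and "t + 2 \<le> i" and "i \<le> j" and "j \<le> n"
  shows "E i j * e t = e t * E i j"
  using assms by (intro RE_commute) (simp_all add: e_commute)

lemma e_REp_commute:
  assumes "1 \<le> t" and "t + 2 \<le> i" and "i \<le> j" and "j \<le> n"
  shows "E' i j * e t = e t * E' i j"
  using assms by (intro REp_commute) (simp_all add: e_commute)

lemma serre_A_e_RE:
  assumes "2 \<le> m" and "m \<le> n - 1"
  shows "serre_A (e (m - 1)) (E m (n - 1))"
  using assms
proof (induction "n - 1 - m" arbitrary: m)
  case 0
  then have "n - 1 = m" and "m - 1 + 1 = m"
    by simp_all
  with 0 show ?case
    using serre_A_e[of "m - 1"] by simp
next
  case (Suc d)
  then have "m < n - 1" and "m - 1 + 1 = m"
    by simp_all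
  have "serre_A (e m) (E (m + 1) (n - 1))"
    using Suc.hyps(1)[of "m + 1"] Suc.hyps(2) Suc.prems by simp
  moreover have "serre_A (e (m - 1)) (e m)"
    using serre_A_e[of "m - 1"] Suc.prems \<open>m < n - 1\<close> \<open>m - 1 + 1 = m\<close> by simp
  moreover have "e (m - 1) * E (m + 1) (n - 1) = E (m + 1) (n - 1) * e (m - 1)"
    using Suc.prems Suc.hyps(2) e_RE_commute[of "m - 1" "m + 1" "n - 1"] by simp
  ultimately show ?case
    using Suc.hyps(2) by (simp add: RE_step serre_A_qcomm_right)
qed

lemma serre_B_RE_e:
  assumes "1 \<le> m" and "m \<le> n - 1"
  shows "serre_B (E m (n - 1)) (e n)"
  using assms
proof (induction "n - 1 - m" arbitrary: m)
  case 0
  then have "n - 1 = m"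
    by simp
  then show ?case
    using serre_B_e by simp
next
  case (Suc d)
  then have "serre_B (E (m + 1) (n - 1)) (e n)" and "serre_A (e m) (E (m + 1) (n - 1))"
    and "e m * e n = e n * e m"
    using Suc.hyps(1)[of "m + 1"] serre_A_e_RE[of "m + 1"] e_commute[of m n] by simp_all
  then show ?case
    using Suc.hyps(2) by (simp add: RE_step serre_B_qcomm_left)
qed

lemma root_relations_B3:
  assumes "2 \<le> j" and "j \<le> n - 1"
  shows "qcomm (E (j - 1) n) (E j n) (r * s) = qcomm (E j (n - 1)) (E' (j - 1) n) (r^2)"
    and "qcomm (qcomm (E' (j - 1) n) (E j (n - 1)) (inverse (s^2))) (e n) ((r * s)^2) = 0"
    and "qcomm (E' (j - 1) n) (E j n) 1 = 0"
    and "qcomm (E' (j - 1) n) (E' j n) (s^2) = 0"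
    and "qcomm (qcomm (E' (j - 1) n) (E j (n - 1)) (inverse (s^2))) (E j n) (s^2) = 0"
    and "qcomm (qcomm (E' (j - 1) n) (E j (n - 1)) (inverse (s^2))) (E' j n) ((r * s^2)^2) = 0"
proof -
  have "e (j - 1) * e n = e n * e (j - 1)"
    using e_commute[of "j - 1" n] assms by simp
  note relations = serre_B3_relations[OF this serre_A_e_RE[OF assms] serre_B_RE_e[of j]]
  have "qcomm (E j (n - 1)) (e n) (r^2) = E j n"
    using RE_right[of j n] assms by simp
  moreover have "qcomm (e (j - 1)) (E j n) (r^2) = E (j - 1) n"
    using RE_step[of "j - 1" n] assms by simp
  ultimately show "qcomm (E (j - 1) n) (E j n) (r * s) = qcomm (E j (n - 1)) (E' (j - 1) n) (r^2)"
    and "qcomm (qcomm (E' (j - 1) n) (E j (n - 1)) (inverse (s^2))) (e n) ((r * s)^2) = 0"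
    and "qcomm (E' (j - 1) n) (E j n) 1 = 0"
    and "qcomm (E' (j - 1) n) (E' j n) (s^2) = 0"
    and "qcomm (qcomm (E' (j - 1) n) (E j (n - 1)) (inverse (s^2))) (E j n) (s^2) = 0"
    and "qcomm (qcomm (E' (j - 1) n) (E j (n - 1)) (inverse (s^2))) (E' j n) ((r * s^2)^2) = 0"
    using relations assms by (simp_all add: REp_top)
qed

lemma root_relations_top:
  assumes "3 \<le> n"
  shows "qcomm (E' (n - 2) (n - 1)) (e n) ((r * s)^2) = 0"
    and "qcomm (E' (n - 2) n) (E (n - 1) n) 1 = 0"
    and "qcomm (E' (n - 2) n) (E' (n - 1) n) (s^2) = 0"
    and "qcomm (E' (n - 2) (n - 1)) (E (n - 1) n) (s^2) = 0"
    and "qcomm (E' (n - 2) (n - 1)) (E' (n - 1) n) ((r * s^2)^2) = 0"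
proof -
  have "2 \<le> n - 1" and "n - 1 - 1 = n - 2" and "n - 1 < n" and "n - 1 + 1 = n"
    using assms by simp_all
  then have "qcomm (E' (n - 2) n) (e (n - 1)) (inverse (s^2)) = E' (n - 2) (n - 1)"
    using REp_step[of "n - 1" "n - 2"] by simp
  with root_relations_B3[of "n - 1"] \<open>2 \<le> n - 1\<close> \<open>n - 1 - 1 = n - 2\<close>
  show "qcomm (E' (n - 2) (n - 1)) (e n) ((r * s)^2) = 0"
    and "qcomm (E' (n - 2) n) (E (n - 1) n) 1 = 0"
    and "qcomm (E' (n - 2) n) (E' (n - 1) n) (s^2) = 0"
    and "qcomm (E' (n - 2) (n - 1)) (E (n - 1) n) (s^2) = 0"
    and "qcomm (E' (n - 2) (n - 1)) (E' (n - 1) n) ((r * s^2)^2) = 0"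
    by simp_all
qed

lemma e_REp_commute_inner:
  assumes "1 \<le> i" and "i < l" and "l + 2 \<le> m" and "m \<le> n"
  shows "E' i m * e l = e l * E' i m"
proof -
  have l: "l - 1 + 1 = l" "1 \<le> l - 1" "2 \<le> l + 1" "l + 1 \<le> n - 1"
    using assms by simp_all
  have "e (l - 1) * E (l + 1) (n - 1) = E (l + 1) (n - 1) * e (l - 1)"
    using e_RE_commute[of "l - 1" "l + 1" "n - 1"] l by simp
  moreover have "e (l - 1) * e n = e n * e (l - 1)" and "e l * e n = e n * e l"
    using e_commute[of "l - 1" n] e_commute[of l n] assms by simp_all
  moreover have "serre_A (e (l - 1)) (e l)" and "serre_A (e l) (E (l + 1) (n - 1))"
    using serre_A_e[of "l - 1"] serre_A_e_RE[OF l(3,4)] assms l by simp_all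
  ultimately have "e l * qcomm (qcomm (e (l - 1)) (qcomm (e l) (qcomm (E (l + 1) (n - 1)) (e n) (r^2))
      (r^2)) (r^2)) (e n) (r * s) = qcomm (qcomm (e (l - 1)) (qcomm (e l) (qcomm (E (l + 1) (n - 1))
      (e n) (r^2)) (r^2)) (r^2)) (e n) (r * s) * e l"
    by (rule serre_B4_commute)
  moreover have "qcomm (E (l + 1) (n - 1)) (e n) (r^2) = E (l + 1) n"
    and "qcomm (e l) (E (l + 1) n) (r^2) = E l n"
    and "qcomm (e (l - 1)) (E l n) (r^2) = E (l - 1) n"
    using RE_right[of "l + 1" n] RE_step[of l n] RE_step[of "l - 1" n] assms l by simp_all
  ultimately have "qcomm (E' (l - 1) n) (e l) 1 = 0"
    by (simp add: REp_top qcomm_one_eq_0_iff)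
  then have "qcomm (E' (l - 1) m) (e l) 1 = 0"
    by (rule REp_qcomm_right) (use assms in \<open>auto intro: e_commute e_commute[symmetric]\<close>)
  then have "qcomm (E' i m) (e l) 1 = 0"
    by (rule REp_qcomm_left) (use assms in \<open>auto intro: e_commute e_commute[symmetric]\<close>)
  then show ?thesis
    by (simp add: qcomm_one_eq_0_iff)
qed

lemma RE_REp_commute:
  assumes "1 \<le> i" and "i < j" and "j \<le> k" and "k + 2 \<le> m" and "m \<le> n"
  shows "E j k * E' i m = E' i m * E j k"
  using assms by (intro RE_commute) (simp_all add: e_REp_commute_inner)

lemma qcomm_RE_RE:
  assumes "1 \<le> i" and "i < j" and "j < n"
  shows "qcomm (E i n) (E j n) (r * s) = qcomm (E j (n - 1)) (E' i n) (r^2)"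
  using assms
proof (induction "j - 1 - i" arbitrary: i)
  case 0
  then have "i = j - 1" and "2 \<le> j" and "j \<le> n - 1"
    by simp_all
  then show ?case
    using root_relations_B3(1)[of j] by simp
next
  case (Suc d)
  then have "i + 1 < j"
    by simp
  have "qcomm (E (i + 1) n) (E j n) (r * s) = qcomm (E j (n - 1)) (E' (i + 1) n) (r^2)"
    using Suc.hyps(1)[of "i + 1"] Suc.hyps(2) Suc.prems \<open>i + 1 < j\<close> by simp
  moreover have "e i * E j n = E j n * e i" and "e i * E j (n - 1) = E j (n - 1) * e i"
    using e_RE_commute[of i j n] e_RE_commute[of i j "n - 1"] Suc.prems \<open>i + 1 < j\<close> by simp_all
  ultimately show ?case
    using Suc.prems \<open>i + 1 < j\<close>
    by (simp add: RE_step[of i n] REp_left[of i n] qcomm_assoc qcomm_exchange_left)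
qed

lemma qcomm_RE_REp_shift:
  assumes "1 \<le> i" and "i < j" and "j < k" and "k < n - 1"
  shows "qcomm (E j k) (E' i (k + 1)) (r^2) = qcomm (E' i (k + 2)) (E j (k + 1)) (inverse (s^2))"
proof -
  have "E' i (k + 2) * E j k = E j k * E' i (k + 2)"
    using RE_REp_commute[of i j k "k + 2"] assms by simp
  moreover have "E j (k + 1) = qcomm (E j k) (e (k + 1)) (r^2)"
    and "E' i (k + 1) = qcomm (E' i (k + 2)) (e (k + 1)) (inverse (s^2))"
    using RE_right[of j "k + 1"] REp_step[of "k + 1" i] assms by simp_all
  ultimately show ?thesis
    by (simp add: qcomm_exchange_left)
qed

lemma qcomm_RE_REp_top: "qcomm (E (n - 1) n) (E' (n - 1) n) (s^2) = 0"
proof -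
  have "n - 1 < n" and "n - 1 + 1 = n"
    using n_ge_2 by simp_all
  then have "E (n - 1) n = qcomm (e (n - 1)) (e n) (r^2)"
    using RE_step[of "n - 1" n] by simp
  then show ?thesis
    using serre_B_root_relation[OF serre_B_e] by (simp add: REp_top)
qed

lemma qcomm_REp_e:
  assumes "1 \<le> i" and "i < j" and "j < n"
  shows "qcomm (E' i j) (e n) ((r * s)^2) = 0"
proof -
  have "qcomm (E' (n - 2) (n - 1)) (e n) ((r * s)^2) = 0"
    using assms by (intro root_relations_top(1)) simp
  then have "qcomm (E' i (n - 1)) (e n) ((r * s)^2) = 0"
    by (rule REp_qcomm_left) (use assms in \<open>auto intro: e_commute e_commute[symmetric]\<close>)
  then show ?thesis
    by (rule REp_qcomm_right) (use assms in \<open>auto intro: e_commute e_commute[symmetric]\<close>)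
qed

lemma qcomm_REp_top:
  assumes "1 \<le> i" and "i < n - 1"
  shows "qcomm (E' i n) (E (n - 1) n) 1 = 0"
    and "qcomm (E' i n) (E' (n - 1) n) (s^2) = 0"
    and "qcomm (E' i (n - 1)) (E (n - 1) n) (s^2) = 0"
    and "qcomm (E' i (n - 1)) (E' (n - 1) n) ((r * s^2)^2) = 0"
proof -
  have "3 \<le> n"
    using assms by simp
  have commute: "e t * E (n - 1) n = E (n - 1) n * e t" "e t * E' (n - 1) n = E' (n - 1) n * e t"
    if "i \<le> t" and "t < n - 2" for t
    using e_RE_commute[of t "n - 1" n] e_REp_commute[of t "n - 1" n] that assms by simp_all
  show "qcomm (E' i n) (E (n - 1) n) 1 = 0"
    by (rule REp_qcomm_left[OF root_relations_top(2)[OF \<open>3 \<le> n\<close>]]) (use assms commute in auto)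
  show "qcomm (E' i n) (E' (n - 1) n) (s^2) = 0"
    by (rule REp_qcomm_left[OF root_relations_top(3)[OF \<open>3 \<le> n\<close>]]) (use assms commute in auto)
  show "qcomm (E' i (n - 1)) (E (n - 1) n) (s^2) = 0"
    by (rule REp_qcomm_left[OF root_relations_top(4)[OF \<open>3 \<le> n\<close>]]) (use assms commute in auto)
  show "qcomm (E' i (n - 1)) (E' (n - 1) n) ((r * s^2)^2) = 0"
    by (rule REp_qcomm_left[OF root_relations_top(5)[OF \<open>3 \<le> n\<close>]]) (use assms commute in auto)
qed

end

theorem lemma3p4:
  fixes n :: nat and r s :: complex and c :: "complex \<Rightarrow> 'a::ring_1"
    and e f w wp winv wpinv :: "nat \<Rightarrow> 'a"
  assumes "n \<ge> 2" and "r \<noteq> 0" and "s \<noteq> 0" and "r^3 \<noteq> s^3" and "r^4 \<noteq> s^4"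
    and "Urs_rel n r s c e f w wp winv wpinv"
  shows
   "(\<forall>i j. 1 \<le> i \<and> i < j \<and> j < n \<longrightarrow>
       RE c r e i n * RE c r e j n - c (r * s) * RE c r e j n * RE c r e i n
     = RE c r e j (n - 1) * REp n c r s e i n - c (r^2) * REp n c r s e i n * RE c r e j (n - 1))
  \<and> (\<forall>i j k. 1 \<le> i \<and> i < j \<and> j < k \<and> k < n - 1 \<longrightarrow>
       RE c r e j k * REp n c r s e i (k + 1) - c (r^2) * REp n c r s e i (k + 1) * RE c r e j k
     = REp n c r s e i (k + 2) * RE c r e j (k + 1)
       - c (inverse (s^2)) * RE c r e j (k + 1) * REp n c r s e i (k + 2))
  \<and> RE c r e (n - 1) n * REp n c r s e (n - 1) n
      = c (s^2) * REp n c r s e (n - 1) n * RE c r e (n - 1) n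
  \<and> (\<forall>i j. 1 \<le> i \<and> i < j \<and> j < n \<longrightarrow>
       REp n c r s e i j * e n = c ((r * s)^2) * e n * REp n c r s e i j)
  \<and> (\<forall>i. 1 \<le> i \<and> i < n - 1 \<longrightarrow>
       REp n c r s e i n * RE c r e (n - 1) n = RE c r e (n - 1) n * REp n c r s e i n)
  \<and> (\<forall>i. 1 \<le> i \<and> i < n - 1 \<longrightarrow>
       REp n c r s e i n * REp n c r s e (n - 1) n
       = c (s^2) * REp n c r s e (n - 1) n * REp n c r s e i n)
  \<and> (\<forall>i. 1 \<le> i \<and> i < n - 1 \<longrightarrow>
       REp n c r s e i (n - 1) * RE c r e (n - 1) n
       = c (s^2) * RE c r e (n - 1) n * REp n c r s e i (n - 1))
  \<and> (\<forall>i. 1 \<le> i \<and> i < n - 1 \<longrightarrow>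
       REp n c r s e i (n - 1) * REp n c r s e (n - 1) n
       = c ((r * s^2)^2) * REp n c r s e (n - 1) n * REp n c r s e i (n - 1))"
proof -
  interpret Urs_algebra c r s n e f w wp winv wpinv
    using assms by unfold_locales (auto simp: Urs_rel_def)
  show ?thesis
    using qcomm_RE_RE qcomm_RE_REp_shift qcomm_RE_REp_top qcomm_REp_e qcomm_REp_top
    by (simp add: diff_eq_qcomm flip: qcomm_eq_0_iff qcomm_one_eq_0_iff)
qed

end
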